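(* Let $l:\mathcal{Y}\times\mathbb{R}\to\mathbb{R}$ be differentiable in its second argument with $|\partial_2 l(y,s)|\le\Lambda$ for all $y\in\mathcal{Y}$, $s\in\mathbb{R}$. Let $(y,z)$ and $(y',z')$ be independent, identically distributed random pairs with values in $\mathcal{Y}\times\mathbb{R}^n$ and $\mathbb{E}\|z\|^2<\infty$, and let $x,x'\in\mathbb{R}^n$ be (possibly random) vectors independent of $(y,z),(y',z')$. Then $$\mathbb{E}_{y,z,y',z'}\Big[\big\langle \nabla_x l(y,\langle z,x\rangle),\,\nabla_x l(y',\langle z',x'\rangle)\big\rangle\Big]\le \Lambda^2\,\big\|\mathbb{E}_{z}[z z^\top]\big\|_{\mathrm{Frob}}=:L^2\alpha,$$ where $\nabla_x l(y,\langle z,x\rangle)=z\,\partial_2 l(y,\langle z,x\rangle)$ and $\|\cdot\|_{\mathrm{Frob}}$ is the Frobenius norm.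
   Context: $L>0$ is the bound on gradient norms of the losses, and the equality $L^2\alpha=\Lambda^2\|\mathbb{E}[zz^\top]\|_{\mathrm{Frob}}$ defines the correlation factor $\alpha$. *)

theory Defs
  imports "HOL-Probability.Probability"
begin

definition frobenius_norm :: "real^'n^'m \<Rightarrow> real" where
  "frobenius_norm A = sqrt (\<Sum>i\<in>UNIV. \<Sum>j\<in>UNIV. (A $ i $ j)^2)"

definition second_moment :: "'a measure \<Rightarrow> ('a \<Rightarrow> real^'n) \<Rightarrow> real^'n^'n" where
  "second_moment M Z = (\<chi> i j. integral\<^sup>L M (\<lambda>\<omega>. Z \<omega> $ i * Z \<omega> $ j))"

end

theory Submission
  imports Defs
begin

text \<open>Write \<open>S\<close> for the second-moment matrix of \<open>z\<close> and \<open>a(\<omega>)\<close> for the bounded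
  scalar factor \<open>\<partial>\<^sub>2 l(y, \<langle>z, x\<rangle>)\<close>. By independence and identical distribution the
  expectation factors as \<open>\<langle>w\<^sub>x, w\<^sub>x'\<rangle>\<close> with \<open>w\<^sub>v = \<bbbE>[a\<^sub>v z]\<close>, so it suffices to bound
  \<open>\<parallel>w\<parallel>\<close> for a single mean \<open>w = \<bbbE>[a z]\<close> with \<open>|a| \<le> \<Lambda>\<close>. Jensen's inequality gives
  \<open>\<parallel>w\<parallel>\<^sup>4 = \<bbbE>[a \<langle>z, w\<rangle>]\<^sup>2 \<le> \<Lambda>\<^sup>2 \<bbbE>[\<langle>z, w\<rangle>\<^sup>2] = \<Lambda>\<^sup>2 \<langle>w w\<^sup>T, S\<rangle>\<close>, and Cauchy-Schwarz for the
  Frobenius inner product bounds the last term by \<open>\<Lambda>\<^sup>2 \<parallel>w\<parallel>\<^sup>2 \<parallel>S\<parallel>\<close>.\<close>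

lemma frobenius_norm_eq_norm: "frobenius_norm (A :: real^'n^'m) = norm A"
  unfolding frobenius_norm_def norm_vec_def L2_set_def real_norm_def
  by (simp add: sum_nonneg)

lemma norm_outer_product: "norm (\<chi> i j. (w :: real^'n) $ i * w $ j) = (norm w)\<^sup>2"
proof -
  have "(\<Sum>i\<in>UNIV. \<Sum>j\<in>UNIV. (w $ i * w $ j)\<^sup>2) = (\<Sum>i\<in>UNIV. (w $ i)\<^sup>2)\<^sup>2"
    by (simp add: power2_eq_square sum_product power_mult_distrib mult_ac)
  then show ?thesis
    by (simp add: frobenius_norm_eq_norm[symmetric] frobenius_norm_def norm_vec_def L2_set_def
        sum_nonneg)
qed

lemma borel_measurable_vec_nth [measurable (raw)]:
  "f \<in> borel_measurable M \<Longrightarrow> (\<lambda>x. (f x :: real^'n) $ i) \<in> borel_measurable M"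
  by (rule borel_measurable_continuous_on[of "\<lambda>v. v $ i"]) (intro continuous_intros)

text \<open>The derivative is the pointwise limit of measurable difference quotients.\<close>
lemma borel_measurable_deriv_uncurried:
  fixes l :: "'y \<Rightarrow> real \<Rightarrow> real"
  assumes l_meas: "(\<lambda>(y, s). l y s) \<in> borel_measurable (MY \<Otimes>\<^sub>M borel)"
    and l_diff: "\<And>y s. l y differentiable (at s)"
  shows "(\<lambda>(y, s). deriv (l y) s) \<in> borel_measurable (MY \<Otimes>\<^sub>M borel)"
proof (rule borel_measurable_LIMSEQ_real)
  fix p :: "'y \<times> real"
  obtain y s where p: "p = (y, s)" by fastforce
  have "DERIV (l y) s :> deriv (l y) s"
    using l_diff DERIV_deriv_iff_real_differentiable by blast
  then have "((\<lambda>h. (l y (s + h) - l y s) / h) \<longlongrightarrow> deriv (l y) s) (at 0)"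
    unfolding DERIV_def .
  with LIMSEQ_inverse_real_of_nat
  show "(\<lambda>n. (l (fst p) (snd p + inverse (Suc n)) - l (fst p) (snd p)) / inverse (Suc n))
      \<longlonglongrightarrow> (case p of (y, s) \<Rightarrow> deriv (l y) s)"
    unfolding p tendsto_at_iff_sequentially by (auto simp: o_def)
next
  fix n :: nat
  have m: "(\<lambda>p. l (fst p) (snd p)) \<in> borel_measurable (MY \<Otimes>\<^sub>M borel)"
    using l_meas by (simp add: case_prod_beta')
  have "(\<lambda>p. l (fst p) (snd p + c)) \<in> borel_measurable (MY \<Otimes>\<^sub>M borel)" for c
    using measurable_compose[OF _ m, of "\<lambda>p. (fst p, snd p + c)"] by simp
  with m show "(\<lambda>p. (l (fst p) (snd p + inverse (Suc n)) - l (fst p) (snd p)) / inverse (Suc n))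
      \<in> borel_measurable (MY \<Otimes>\<^sub>M borel)"
    by measurable
qed

context prob_space
begin

lemma integrable_component_mult_component:
  fixes Z :: "'a \<Rightarrow> real^'n"
  assumes [measurable]: "Z \<in> borel_measurable M"
    and "integrable M (\<lambda>\<omega>. (norm (Z \<omega>))\<^sup>2)"
  shows "integrable M (\<lambda>\<omega>. Z \<omega> $ i * Z \<omega> $ j)"
proof (rule Bochner_Integration.integrable_bound[OF assms(2)])
  show "AE \<omega> in M. norm (Z \<omega> $ i * Z \<omega> $ j) \<le> norm ((norm (Z \<omega>))\<^sup>2)"
    by (intro AE_I2)
      (auto simp: abs_mult power2_eq_square intro!: mult_mono component_le_norm_cart)
qed measurable

lemma integrable_bounded_mult_component:
  fixes Z :: "'a \<Rightarrow> real^'n"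
  assumes [measurable]: "a \<in> borel_measurable M" "Z \<in> borel_measurable M"
    and a_bound: "\<And>\<omega>. \<bar>a \<omega>\<bar> \<le> \<Lambda>"
    and moment: "integrable M (\<lambda>\<omega>. (norm (Z \<omega>))\<^sup>2)"
  shows "integrable M (\<lambda>\<omega>. a \<omega> * Z \<omega> $ i)"
proof (rule Bochner_Integration.integrable_bound)
  show "integrable M (\<lambda>\<omega>. \<Lambda> * norm (Z \<omega>))"
    using square_integrable_imp_integrable[OF _ moment] by simp
  have \<Lambda>_nonneg: "0 \<le> \<Lambda>"
    using a_bound[of undefined] by linarith
  have "\<bar>a \<omega>\<bar> * \<bar>Z \<omega> $ i\<bar> \<le> \<Lambda> * norm (Z \<omega>)" for \<omega>
    using \<Lambda>_nonneg by (intro mult_mono a_bound) (auto simp: component_le_norm_cart)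
  then show "AE \<omega> in M. norm (a \<omega> * Z \<omega> $ i) \<le> norm (\<Lambda> * norm (Z \<omega>))"
    using \<Lambda>_nonneg by (intro AE_I2) (simp add: abs_mult)
qed measurable

lemma integral_inner_square_eq_second_moment:
  fixes Z :: "'a \<Rightarrow> real^'n"
  assumes "Z \<in> borel_measurable M" "integrable M (\<lambda>\<omega>. (norm (Z \<omega>))\<^sup>2)"
  shows "integrable M (\<lambda>\<omega>. (Z \<omega> \<bullet> w)\<^sup>2)"
    and "integral\<^sup>L M (\<lambda>\<omega>. (Z \<omega> \<bullet> w)\<^sup>2) = (\<chi> i j. w $ i * w $ j) \<bullet> second_moment M Z"
proof -
  have expand: "(Z \<omega> \<bullet> w)\<^sup>2 = (\<Sum>i\<in>UNIV. \<Sum>j\<in>UNIV. w $ i * w $ j * (Z \<omega> $ i * Z \<omega> $ j))"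
    for \<omega>
    by (simp add: inner_vec_def power2_eq_square sum_product mult_ac)
  note integrable = integrable_component_mult_component[OF assms]
  show "integrable M (\<lambda>\<omega>. (Z \<omega> \<bullet> w)\<^sup>2)"
    unfolding expand using integrable by auto
  show "integral\<^sup>L M (\<lambda>\<omega>. (Z \<omega> \<bullet> w)\<^sup>2) = (\<chi> i j. w $ i * w $ j) \<bullet> second_moment M Z"
    unfolding expand using integrable
    by (simp add: integral_sum inner_vec_def second_moment_def sum_distrib_left mult_ac)
qed

lemma norm_mean_bounded_mult_le:
  fixes Z :: "'a \<Rightarrow> real^'n"
  assumes [measurable]: "a \<in> borel_measurable M" "Z \<in> borel_measurable M"
    and a_bound: "\<And>\<omega>. \<bar>a \<omega>\<bar> \<le> \<Lambda>"
    and moment: "integrable M (\<lambda>\<omega>. (norm (Z \<omega>))\<^sup>2)"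
  shows "norm (\<chi> i. integral\<^sup>L M (\<lambda>\<omega>. a \<omega> * Z \<omega> $ i)) \<le> \<Lambda> * sqrt (norm (second_moment M Z))"
proof -
  define w where "w = (\<chi> i. integral\<^sup>L M (\<lambda>\<omega>. a \<omega> * Z \<omega> $ i))"
  define X where "X \<omega> = a \<omega> * (Z \<omega> \<bullet> w)" for \<omega>
  have \<Lambda>_nonneg: "0 \<le> \<Lambda>"
    using a_bound[of undefined] by linarith
  note aZ = integrable_bounded_mult_component[OF assms]
  note Zw = integral_inner_square_eq_second_moment[OF assms(2) moment, of w]
  have X_sum: "X \<omega> = (\<Sum>i\<in>UNIV. w $ i * (a \<omega> * Z \<omega> $ i))" for \<omega>
    by (simp add: X_def inner_vec_def sum_distrib_left mult_ac)
  have X: "integrable M X"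
    unfolding X_sum using aZ by auto
  have norm_w: "(norm w)\<^sup>2 = expectation X"
    unfolding X_sum power2_norm_eq_inner using aZ
    by (simp add: integral_sum inner_vec_def w_def)
  have X_square: "(X \<omega>)\<^sup>2 \<le> \<Lambda>\<^sup>2 * (Z \<omega> \<bullet> w)\<^sup>2" for \<omega>
    unfolding X_def power_mult_distrib
    using a_bound[of \<omega>] by (intro mult_right_mono) (auto simp: abs_le_square_iff[symmetric])
  have X_square_int: "integrable M (\<lambda>\<omega>. (X \<omega>)\<^sup>2)"
  proof (rule Bochner_Integration.integrable_bound)
    show "integrable M (\<lambda>\<omega>. \<Lambda>\<^sup>2 * (Z \<omega> \<bullet> w)\<^sup>2)"
      using Zw(1) by simp
    show "(\<lambda>\<omega>. (X \<omega>)\<^sup>2) \<in> borel_measurable M"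
      using X by measurable
    show "AE \<omega> in M. norm ((X \<omega>)\<^sup>2) \<le> norm (\<Lambda>\<^sup>2 * (Z \<omega> \<bullet> w)\<^sup>2)"
      using X_square by (intro AE_I2) simp
  qed
  have "((norm w)\<^sup>2)\<^sup>2 \<le> expectation (\<lambda>\<omega>. (X \<omega>)\<^sup>2)"
    using variance_eq[OF X X_square_int] variance_positive[of X] norm_w by simp
  also have "\<dots> \<le> expectation (\<lambda>\<omega>. \<Lambda>\<^sup>2 * (Z \<omega> \<bullet> w)\<^sup>2)"
    using X_square_int Zw(1) X_square by (intro integral_mono) auto
  also have "\<dots> = \<Lambda>\<^sup>2 * expectation (\<lambda>\<omega>. (Z \<omega> \<bullet> w)\<^sup>2)"
    by simp
  also have "\<dots> \<le> \<Lambda>\<^sup>2 * ((norm w)\<^sup>2 * norm (second_moment M Z))"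
    unfolding Zw(2)
    using norm_cauchy_schwarz[of "\<chi> i j. w $ i * w $ j"] norm_outer_product[of w]
    by (intro mult_left_mono) auto
  finally have norm_w_fourth:
      "(norm w)\<^sup>2 * (norm w)\<^sup>2 \<le> (\<Lambda>\<^sup>2 * norm (second_moment M Z)) * (norm w)\<^sup>2"
    by (simp add: power2_eq_square mult_ac)
  have "(norm w)\<^sup>2 \<le> \<Lambda>\<^sup>2 * norm (second_moment M Z)"
    using mult_right_le_imp_le[OF norm_w_fourth] by (cases "w = 0") auto
  then have "norm w \<le> sqrt (\<Lambda>\<^sup>2 * norm (second_moment M Z))"
    by (rule real_le_rsqrt)
  then show ?thesis
    unfolding w_def using \<Lambda>_nonneg by (simp add: real_sqrt_mult)
qed

lemma integral_mult_indep_ident: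
  fixes f g :: "'b \<Rightarrow> real"
  assumes indep: "indep_var N X N X'"
    and ident: "distr M N X = distr M N X'"
    and X: "X \<in> measurable M N" and X': "X' \<in> measurable M N"
    and f_meas: "f \<in> borel_measurable N" and g_meas: "g \<in> borel_measurable N"
    and f: "integrable M (\<lambda>\<omega>. f (X \<omega>))" and g: "integrable M (\<lambda>\<omega>. g (X \<omega>))"
  shows "integrable M (\<lambda>\<omega>. f (X \<omega>) * g (X' \<omega>))"
    and "integral\<^sup>L M (\<lambda>\<omega>. f (X \<omega>) * g (X' \<omega>))
       = integral\<^sup>L M (\<lambda>\<omega>. f (X \<omega>)) * integral\<^sup>L M (\<lambda>\<omega>. g (X \<omega>))"
proof -
  have fg: "indep_var borel (\<lambda>\<omega>. f (X \<omega>)) borel (\<lambda>\<omega>. g (X' \<omega>))"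
    using indep_var_compose[OF indep f_meas g_meas] by (simp add: comp_def)
  have g': "integrable M (\<lambda>\<omega>. g (X' \<omega>))"
    using g integrable_distr_eq[OF X' g_meas] integrable_distr_eq[OF X g_meas] ident by simp
  show "integrable M (\<lambda>\<omega>. f (X \<omega>) * g (X' \<omega>))"
    by (rule indep_var_integrable[OF fg f g'])
  have "integral\<^sup>L M (\<lambda>\<omega>. g (X' \<omega>)) = integral\<^sup>L M (\<lambda>\<omega>. g (X \<omega>))"
    using integral_distr[OF X' g_meas] integral_distr[OF X g_meas] ident by simp
  then show "integral\<^sup>L M (\<lambda>\<omega>. f (X \<omega>) * g (X' \<omega>))
       = integral\<^sup>L M (\<lambda>\<omega>. f (X \<omega>)) * integral\<^sup>L M (\<lambda>\<omega>. g (X \<omega>))"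
    using indep_var_lebesgue_integral[OF fg f g'] by simp
qed

end

theorem lemma5:
  fixes M :: "'a measure" and MY :: "'y measure"
    and l :: "'y \<Rightarrow> real \<Rightarrow> real" and \<Lambda> :: real
    and Y Y' :: "'a \<Rightarrow> 'y" and Z Z' :: "'a \<Rightarrow> real^'n"
    and x x' :: "real^'n"
  assumes "prob_space M"
    and l_meas: "(\<lambda>(y, s). l y s) \<in> borel_measurable (MY \<Otimes>\<^sub>M borel)"
    and l_diff: "\<And>y s. l y differentiable (at s)"
    and l_bound: "\<And>y s. \<bar>deriv (l y) s\<bar> \<le> \<Lambda>"
    and meas1: "(\<lambda>\<omega>. (Y \<omega>, Z \<omega>)) \<in> measurable M (MY \<Otimes>\<^sub>M borel)"
    and meas2: "(\<lambda>\<omega>. (Y' \<omega>, Z' \<omega>)) \<in> measurable M (MY \<Otimes>\<^sub>M borel)"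
    and indep: "prob_space.indep_var M (MY \<Otimes>\<^sub>M borel) (\<lambda>\<omega>. (Y \<omega>, Z \<omega>))
                                       (MY \<Otimes>\<^sub>M borel) (\<lambda>\<omega>. (Y' \<omega>, Z' \<omega>))"
    and ident: "distr M (MY \<Otimes>\<^sub>M borel) (\<lambda>\<omega>. (Y \<omega>, Z \<omega>))
              = distr M (MY \<Otimes>\<^sub>M borel) (\<lambda>\<omega>. (Y' \<omega>, Z' \<omega>))"
    and moment: "integrable M (\<lambda>\<omega>. (norm (Z \<omega>))^2)"
  shows "integral\<^sup>L M (\<lambda>\<omega>.
            (deriv (l (Y \<omega>)) (Z \<omega> \<bullet> x) *\<^sub>R Z \<omega>) \<bullet>
            (deriv (l (Y' \<omega>)) (Z' \<omega> \<bullet> x') *\<^sub>R Z' \<omega>))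
         \<le> \<Lambda>^2 * frobenius_norm (second_moment M Z)"
proof -
  interpret prob_space M by fact
  have [measurable]: "(\<lambda>(y, s). deriv (l y) s) \<in> borel_measurable (MY \<Otimes>\<^sub>M borel)"
    using l_meas l_diff by (rule borel_measurable_deriv_uncurried)
  have [measurable]: "Y \<in> measurable M MY" and Z_meas[measurable]: "Z \<in> borel_measurable M"
    using meas1 by (auto simp: measurable_pair_iff o_def)
  define g where "g v i p = deriv (l (fst p)) (snd p \<bullet> v) * snd p $ i"
    for v :: "real^'n" and i and p :: "'y \<times> (real^'n)"
  have g_meas: "g v i \<in> borel_measurable (MY \<Otimes>\<^sub>M borel)" for v i
    unfolding g_def by measurable
  have g_int: "integrable M (\<lambda>\<omega>. g v i (Y \<omega>, Z \<omega>))" for v i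
    unfolding g_def fst_conv snd_conv
    by (rule integrable_bounded_mult_component[OF _ Z_meas l_bound moment]) measurable
  note factor = integral_mult_indep_ident[OF indep ident meas1 meas2 g_meas g_meas g_int g_int]
  define w where "w v = (\<chi> i. integral\<^sup>L M (\<lambda>\<omega>. deriv (l (Y \<omega>)) (Z \<omega> \<bullet> v) * Z \<omega> $ i))"
    for v
  have w_le: "norm (w v) \<le> \<Lambda> * sqrt (norm (second_moment M Z))" for v
    unfolding w_def by (rule norm_mean_bounded_mult_le[OF _ Z_meas l_bound moment]) measurable
  have "integral\<^sup>L M (\<lambda>\<omega>. (deriv (l (Y \<omega>)) (Z \<omega> \<bullet> x) *\<^sub>R Z \<omega>) \<bullet>
            (deriv (l (Y' \<omega>)) (Z' \<omega> \<bullet> x') *\<^sub>R Z' \<omega>))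
      = (\<Sum>i\<in>UNIV. integral\<^sup>L M (\<lambda>\<omega>. g x i (Y \<omega>, Z \<omega>) * g x' i (Y' \<omega>, Z' \<omega>)))"
    using factor(1) by (simp add: g_def inner_vec_def integral_sum mult_ac)
  also have "\<dots> = w x \<bullet> w x'"
    unfolding factor(2) by (simp add: g_def w_def inner_vec_def)
  also have "\<dots> \<le> norm (w x) * norm (w x')"
    by (rule norm_cauchy_schwarz)
  also have "\<dots> \<le> (\<Lambda> * sqrt (norm (second_moment M Z)))\<^sup>2"
    unfolding power2_eq_square using w_le
    by (intro mult_mono) (auto intro: order_trans[OF norm_ge_zero])
  also have "\<dots> = \<Lambda>\<^sup>2 * frobenius_norm (second_moment M Z)"
    by (simp add: power_mult_distrib frobenius_norm_eq_norm)
  finally show ?thesis .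
qed

end
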